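(* Let $G$ be a connected signed digraph that is not a signed cycle. Then there exists a degree-bounded finite dynamical system $f:X\to X$ on $G$ and $\xi\in X$ such that $f^{\lambda(G)+\beta(G)}(x)=\xi$ for all $x\in X$, and such that $\xi_i=\min(X_i)$ for every source $i$ of $G$.
   Context: A finite dynamical system (FDS) with $n$ components is a map $f=(f_1,\dots,f_n):X\to X$ where $X=X_1\times\cdots\times X_n$ and each $X_i$ is a nonempty finite interval of integers; $f^k$ is the $k$-fold composition. A signed digraph is a pair $G=(V,E)$ with $E\subseteq V\times V\times\{+,-\}$; $(j,i,s)\in E$ is an arc from $j$ to $i$ of sign $s$ (loops allowed; $G$ may have both a positive and a negative arc from $j$ to $i$, called parallel arcs). Write $G^+_i=\{j:(j,i,+)\in E\}$, $G^-_i=\{j:(j,i,-)\in E\}$, $G_i=G^+_i\cup G^-_i$. In-degree $d^{\mathrm{in}}_G(i)=|G^+_i|+|G^-_i|$; out-degree $d^{\mathrm{out}}_G(i)$ is the number of positive arcs leaving $i$ plus the number of negative arcs leaving $i$. A source is a vertex of in-degree $0$. $G$ is connected if its underlying undirected graph is connected. The underlying unsigned digraph $|G|$ has vertex set $V$ and an arc from $j$ to $i$ iff $j\in G_i$. $G$ is a signed cycle if $|G|$ is a directed cycle (through all vertices, each exactly once; a single vertex with a loop counts) and $G$ has no parallel arcs. A strong component of $G$ is a maximal $U\subseteq V$ such that the induced subgraph $G[U]$ is strongly connected; it is initial if $G$ has no arc from $V\setminus U$ to $U$, and trivial if $G[U]$ has one vertex and no arc. $G$ is basic if all its initial strong components are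 trivial; $\beta(G)=0$ if $G$ is basic and $\beta(G)=1$ otherwise. $d_G(j,i)$ is the minimum number of arcs of a directed path from $j$ to $i$ ($0$ if $j=i$, $\infty$ if no path), and $d_G(U,i)=\min_{j\in U}d_G(j,i)$. With $\mathcal I$ the set of initial strong components, $\lambda(G)=\max_{i\in V}\min_{U\in\mathcal I}\big(d_G(U,i)+|U|\big)$. The interaction graph of an FDS $f$ is the signed digraph on $\{1,\dots,n\}$ with a positive (resp. negative) arc from $j$ to $i$ iff there is $x\in X$ with $x_j<\max(X_j)$ such that $f_i(x+e_j)-f_i(x)$ is positive (resp. negative), $e_j$ the $j$-th unit vector. $f$ is an FDS on $G$ if $G$ is its interaction graph. $f$ is degree-bounded if, with $G$ its interaction graph, for every $i$: $|X_i|=2$ if $d^{\mathrm{out}}_G(i)=0<d^{\mathrm{in}}_G(i)$, and $|X_i|\le d^{\mathrm{out}}_G(i)+1$ otherwise. *)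

theory Defs
  imports Main "HOL-Library.Extended_Nat"
begin

text \<open>A signed digraph on vertex set {0..<n} is a set E of triples (j, i, s):
  an arc from j to i with sign s, where s = True means positive and s = False negative.\<close>

definition arcs :: "(nat \<times> nat \<times> bool) set \<Rightarrow> (nat \<times> nat) set" where
  "arcs E = {(j, i). \<exists>s. (j, i, s) \<in> E}"

definition in_degree :: "(nat \<times> nat \<times> bool) set \<Rightarrow> nat \<Rightarrow> nat" where
  "in_degree E i = card {(j, s). (j, i, s) \<in> E}"

definition out_degree :: "(nat \<times> nat \<times> bool) set \<Rightarrow> nat \<Rightarrow> nat" where
  "out_degree E i = card {(k, s). (i, k, s) \<in> E}"

definition sd_connected :: "nat \<Rightarrow> (nat \<times> nat \<times> bool) set \<Rightarrow> bool" where
  "sd_connected n E \<longleftrightarrow> (\<forall>u<n. \<forall>v<n. (u, v) \<in> (arcs E \<union> (arcs E)\<inverse>)\<^sup>*)"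

definition is_signed_cycle :: "nat \<Rightarrow> (nat \<times> nat \<times> bool) set \<Rightarrow> bool" where
  "is_signed_cycle n E \<longleftrightarrow>
     (\<exists>vs. length vs = n \<and> distinct vs \<and> set vs = {0..<n} \<and>
        arcs E = {(vs ! k, vs ! ((k + 1) mod n)) | k. k < n}) \<and>
     \<not> (\<exists>j i. (j, i, True) \<in> E \<and> (j, i, False) \<in> E)"

definition strongly_connected_in :: "(nat \<times> nat) set \<Rightarrow> nat set \<Rightarrow> bool" where
  "strongly_connected_in A U \<longleftrightarrow> (\<forall>u\<in>U. \<forall>v\<in>U. (u, v) \<in> (A \<inter> U \<times> U)\<^sup>*)"

definition strong_component :: "nat \<Rightarrow> (nat \<times> nat \<times> bool) set \<Rightarrow> nat set \<Rightarrow> bool" where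
  "strong_component n E U \<longleftrightarrow> U \<subseteq> {0..<n} \<and> U \<noteq> {} \<and> strongly_connected_in (arcs E) U \<and>
     (\<forall>U'. U \<subseteq> U' \<and> U' \<subseteq> {0..<n} \<and> strongly_connected_in (arcs E) U' \<longrightarrow> U' = U)"

definition initial_sc :: "nat \<Rightarrow> (nat \<times> nat \<times> bool) set \<Rightarrow> nat set \<Rightarrow> bool" where
  "initial_sc n E U \<longleftrightarrow> strong_component n E U \<and>
     \<not> (\<exists>j i. (j, i) \<in> arcs E \<and> j \<notin> U \<and> i \<in> U)"

definition trivial_sc :: "(nat \<times> nat \<times> bool) set \<Rightarrow> nat set \<Rightarrow> bool" where
  "trivial_sc E U \<longleftrightarrow> card U = 1 \<and> arcs E \<inter> U \<times> U = {}"

definition basic :: "nat \<Rightarrow> (nat \<times> nat \<times> bool) set \<Rightarrow> bool" where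
  "basic n E \<longleftrightarrow> (\<forall>U. initial_sc n E U \<longrightarrow> trivial_sc E U)"

definition beta :: "nat \<Rightarrow> (nat \<times> nat \<times> bool) set \<Rightarrow> nat" where
  "beta n E = (if basic n E then 0 else 1)"

definition sd_dist :: "(nat \<times> nat \<times> bool) set \<Rightarrow> nat \<Rightarrow> nat \<Rightarrow> enat" where
  "sd_dist E j i = (if (j, i) \<in> (arcs E)\<^sup>* then enat (LEAST k. (j, i) \<in> arcs E ^^ k) else \<infinity>)"

definition sd_dist_set :: "(nat \<times> nat \<times> bool) set \<Rightarrow> nat set \<Rightarrow> nat \<Rightarrow> enat" where
  "sd_dist_set E U i = Min ((\<lambda>j. sd_dist E j i) ` U)"

definition lambda_G :: "nat \<Rightarrow> (nat \<times> nat \<times> bool) set \<Rightarrow> enat" where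
  "lambda_G n E = Max ((\<lambda>i. Min ((\<lambda>U. sd_dist_set E U i + enat (card U)) ` {U. initial_sc n E U}))
                        ` {0..<n})"

text \<open>X = X_0 \<times> ... \<times> X_(n-1) with X_i = {lo i .. hi i}; states are functions nat \<Rightarrow> int
  that are 0 outside {0..<n}.\<close>

definition state_space :: "nat \<Rightarrow> (nat \<Rightarrow> int) \<Rightarrow> (nat \<Rightarrow> int) \<Rightarrow> (nat \<Rightarrow> int) set" where
  "state_space n lo hi = {x. (\<forall>i<n. lo i \<le> x i \<and> x i \<le> hi i) \<and> (\<forall>i. n \<le> i \<longrightarrow> x i = 0)}"

definition is_FDS :: "nat \<Rightarrow> (nat \<Rightarrow> int) \<Rightarrow> (nat \<Rightarrow> int) \<Rightarrow> ((nat \<Rightarrow> int) \<Rightarrow> (nat \<Rightarrow> int)) \<Rightarrow> bool" where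
  "is_FDS n lo hi f \<longleftrightarrow> (\<forall>i<n. lo i \<le> hi i) \<and> (\<forall>x\<in>state_space n lo hi. f x \<in> state_space n lo hi)"

definition interaction_graph ::
  "nat \<Rightarrow> (nat \<Rightarrow> int) \<Rightarrow> (nat \<Rightarrow> int) \<Rightarrow> ((nat \<Rightarrow> int) \<Rightarrow> (nat \<Rightarrow> int)) \<Rightarrow> (nat \<times> nat \<times> bool) set" where
  "interaction_graph n lo hi f = {(j, i, s). j < n \<and> i < n \<and>
     (\<exists>x\<in>state_space n lo hi. x j < hi j \<and>
        (if s then f (x(j := x j + 1)) i - f x i > 0 else f (x(j := x j + 1)) i - f x i < 0))}"

definition degree_bounded ::
  "nat \<Rightarrow> (nat \<Rightarrow> int) \<Rightarrow> (nat \<Rightarrow> int) \<Rightarrow> ((nat \<Rightarrow> int) \<Rightarrow> (nat \<Rightarrow> int)) \<Rightarrow> bool" where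
  "degree_bounded n lo hi f \<longleftrightarrow>
     (let G = interaction_graph n lo hi f in
      \<forall>i<n. (if out_degree G i = 0 \<and> 0 < in_degree G i
             then hi i - lo i + 1 = 2
             else hi i - lo i + 1 \<le> int (out_degree G i) + 1))"

end

theory Submission
  imports Defs "HOL-Combinatorics.Orbits"
begin

text \<open>
  Component j takes values in {0..hi j}, where hi j = 2 exactly when j has out-degree at least 2,
  and f i is an AND or an OR of one literal per in-neighbour j of i, taking the values 0 and
  active i. The literal of j for i is non-monotone in x j on a pair of parallel arcs and monotone
  of the sign of the arc otherwise, so the interaction graph is exactly G, whatever the gates.

  The gates are chosen absorbing for values that are already frozen. Sources are frozen after one
  step. As G is connected and not a cycle, every nontrivial initial strong component contains a
  vertex q of out-degree at least 2 with an out-neighbour r in the same component; active q is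
  chosen so that the literal of the arc q \<rightarrow> r is constant on {0, active q}, hence the anchor r is
  frozen after two steps. Freezing then spreads along one arc per step, which reaches every
  vertex within \<lambda>(G) + \<beta>(G) steps.
\<close>

section \<open>Relations, orbits and cycles\<close>

lemma rtrancl_exits_set:
  assumes "(x, y) \<in> R\<^sup>*" "x \<in> S" "y \<notin> S"
  obtains a c where "(a, c) \<in> R" "a \<in> S" "c \<notin> S"
  using assms by (induction rule: rtrancl_induct) auto

lemma rtrancl_Int_rtrancl: "(x, y) \<in> (R \<inter> S)\<^sup>* \<Longrightarrow> (x, y) \<in> R\<^sup>*"
  using rtrancl_mono[of "R \<inter> S" R] by blast

lemma spreading_family_covers:
  fixes S :: "nat \<Rightarrow> 'a set"
  assumes fin: "finite U"
    and sub: "\<And>t. S t \<subseteq> U"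
    and mono: "\<And>t. S t \<subseteq> S (Suc t)"
    and spread: "\<And>t a c. a \<in> S t \<Longrightarrow> (a, c) \<in> R \<Longrightarrow> c \<in> U \<Longrightarrow> c \<in> S (Suc t)"
    and seed: "r \<in> S t0"
    and reach: "\<And>v. v \<in> U \<Longrightarrow> (r, v) \<in> (R \<inter> U \<times> U)\<^sup>*"
  shows "S (t0 + (card U - 1)) = U"
proof -
  have finS: "finite (S t)" for t
    using finite_subset[OF sub fin] .
  have grow: "min (Suc k) (card U) \<le> card (S (t0 + k))" for k
  proof (induction k)
    case 0
    then show ?case using seed finS[of t0] card_0_eq by fastforce
  next
    case (Suc k)
    let ?S = "S (t0 + k)" and ?S' = "S (t0 + Suc k)"
    have "?S \<subseteq> ?S'" using mono by simp
    show ?case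
    proof (cases "?S = U")
      case True
      then have "?S' = U" using \<open>?S \<subseteq> ?S'\<close> sub by blast
      then show ?thesis by simp
    next
      case False
      then obtain v where v: "v \<in> U" "v \<notin> ?S" using sub by blast
      have "r \<in> ?S" using seed lift_Suc_mono_le[of S, OF mono, of t0 "t0 + k"] by auto
      then obtain a c where ac: "(a, c) \<in> R \<inter> U \<times> U" "a \<in> ?S" "c \<notin> ?S"
        using rtrancl_exits_set[OF reach[OF v(1)]] v(2) by blast
      then have "insert c ?S \<subseteq> ?S'" using spread \<open>?S \<subseteq> ?S'\<close> by auto
      then have "Suc (card ?S) \<le> card ?S'"
        using card_mono[OF finS] ac(3) finS by (metis card_insert_disjoint)
      then show ?thesis using Suc.IH by linarith
    qed
  qed
  have "card U \<le> card (S (t0 + (card U - 1)))"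
    using grow[of "card U - 1"] by simp
  then show ?thesis using card_seteq[OF fin sub] by blast
qed

lemma sd_connected_closed_set:
  assumes "sd_connected n E" "u \<in> U" "u < n"
    and closed: "\<And>y z. (y, z) \<in> arcs E \<Longrightarrow> y \<in> U \<longleftrightarrow> z \<in> U"
  shows "{0..<n} \<subseteq> U"
proof
  fix v assume "v \<in> {0..<n}"
  then have "(u, v) \<in> (arcs E \<union> (arcs E)\<inverse>)\<^sup>*"
    using assms(1,3) by (simp add: sd_connected_def)
  then show "v \<in> U"
    by (induction rule: rtrancl_induct) (use assms(2) closed in blast)+
qed

lemma orbit_enumeration:
  assumes "x \<in> orbit g x"
  shows "bij_betw (\<lambda>k. (g ^^ k) x) {0..<card (orbit g x)} (orbit g x)"
    and "(g ^^ card (orbit g x)) x = x"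
proof -
  define N where "N = funpow_dist1 g x x"
  have inj: "inj_on (\<lambda>k. (g ^^ k) x) {0..<N}"
    unfolding N_def using assms by (rule inj_on_funpow_dist1)
  have image: "orbit g x = (\<lambda>k. (g ^^ k) x) ` {0..<N}"
    unfolding N_def using assms by (rule orbit_conv_funpow_dist1)
  have "card (orbit g x) = N"
    using card_image[OF inj] image by simp
  then show "bij_betw (\<lambda>k. (g ^^ k) x) {0..<card (orbit g x)} (orbit g x)"
    using inj image by (simp add: bij_betw_def)
  show "(g ^^ card (orbit g x)) x = x"
    unfolding \<open>card (orbit g x) = N\<close> N_def using assms by (rule funpow_dist1_prop)
qed

lemma orbit_eq_if_arcs_follow_function:
  fixes g :: "nat \<Rightarrow> nat"
  assumes "0 < n"
    and g_range: "\<And>u. u < n \<Longrightarrow> g u < n"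
    and arcs_g: "arcs E = {(u, g u) | u. u < n}"
    and strong: "\<And>u v. u < n \<Longrightarrow> v < n \<Longrightarrow> (u, v) \<in> (arcs E)\<^sup>*"
  shows "orbit g 0 = {0..<n}"
proof
  have "v \<in> orbit g 0" if "(g 0, v) \<in> (arcs E)\<^sup>*" for v
    using that
  proof (induction rule: rtrancl_induct)
    case base
    show ?case by (rule orbit.base)
  next
    case (step y z)
    then have "z = g y" by (auto simp: arcs_g)
    then show ?case using step.IH by (simp add: orbit.step)
  qed
  then show "{0..<n} \<subseteq> orbit g 0"
    using strong g_range \<open>0 < n\<close> by (simp add: subset_iff)
  have "(g ^^ k) 0 < n" for k
    by (induction k) (simp_all add: \<open>0 < n\<close> g_range)
  then show "orbit g 0 \<subseteq> {0..<n}"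
    by (auto simp: orbit_altdef)
qed

lemma signed_cycle_if_arcs_follow_function:
  fixes g :: "nat \<Rightarrow> nat"
  assumes "0 < n"
    and g_range: "\<And>u. u < n \<Longrightarrow> g u < n"
    and arcs_g: "arcs E = {(u, g u) | u. u < n}"
    and strong: "\<And>u v. u < n \<Longrightarrow> v < n \<Longrightarrow> (u, v) \<in> (arcs E)\<^sup>*"
    and simple: "\<not> (\<exists>j i. (j, i, True) \<in> E \<and> (j, i, False) \<in> E)"
  shows "is_signed_cycle n E"
proof -
  have orbit: "orbit g 0 = {0..<n}"
    using orbit_eq_if_arcs_follow_function[OF assms(1-4)] .
  then have "0 \<in> orbit g 0" using \<open>0 < n\<close> by simp
  from orbit_enumeration[OF this] orbit
  have bij: "bij_betw (\<lambda>k. (g ^^ k) 0) {0..<n} {0..<n}" and period: "(g ^^ n) 0 = 0"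
    by simp_all
  define vs where "vs = map (\<lambda>k. (g ^^ k) 0) [0..<n]"
  have vs_nth: "vs ! k = (g ^^ k) 0" if "k < n" for k
    using that by (simp add: vs_def)
  have succ: "vs ! ((k + 1) mod n) = g (vs ! k)" if "k < n" for k
  proof -
    have "(k + 1) mod n < n" using \<open>0 < n\<close> by simp
    then have "vs ! ((k + 1) mod n) = (g ^^ (Suc k mod n)) 0"
      by (simp add: vs_nth)
    also have "\<dots> = g (vs ! k)"
      using funpow_mod_eq[OF period, of "Suc k"] that by (simp add: vs_nth)
    finally show ?thesis .
  qed
  have vs_range: "\<exists>k<n. u = vs ! k" if "u < n" for u
  proof -
    have "u \<in> (\<lambda>k. (g ^^ k) 0) ` {0..<n}" using that bij by (simp add: bij_betw_def)
    then obtain k where "k < n" "u = (g ^^ k) 0" by auto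
    then show ?thesis by (auto simp: vs_nth)
  qed
  have "arcs E = {(vs ! k, vs ! ((k + 1) mod n)) | k. k < n}"
  proof (intro equalityI subsetI)
    fix p assume "p \<in> arcs E"
    then obtain u where "u < n" "p = (u, g u)" by (auto simp: arcs_g)
    then obtain k where "k < n" "p = (vs ! k, vs ! ((k + 1) mod n))"
      using vs_range succ by metis
    then show "p \<in> {(vs ! k, vs ! ((k + 1) mod n)) | k. k < n}" by blast
  next
    fix p assume "p \<in> {(vs ! k, vs ! ((k + 1) mod n)) | k. k < n}"
    then obtain k where "k < n" "p = (vs ! k, g (vs ! k))" using succ by auto
    then show "p \<in> arcs E" using vs_nth g_range bij by (auto simp: arcs_g bij_betw_def)
  qed
  moreover have "length vs = n" "distinct vs" "set vs = {0..<n}"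
    using bij by (simp_all add: vs_def distinct_map bij_betw_def)
  ultimately show ?thesis
    using simple unfolding is_signed_cycle_def by blast
qed

section \<open>Initial strong components\<close>

locale signed_digraph =
  fixes n :: nat and E :: "(nat \<times> nat \<times> bool) set"
  assumes arcs_in_range: "E \<subseteq> {0..<n} \<times> {0..<n} \<times> UNIV"
begin

lemma arc_in_range: "(j, i) \<in> arcs E \<Longrightarrow> j < n \<and> i < n"
  using arcs_in_range by (auto simp: arcs_def)

lemma rtrancl_in_range: "(j, i) \<in> (arcs E)\<^sup>* \<Longrightarrow> j \<noteq> i \<Longrightarrow> j < n \<and> i < n"
  by (metis arc_in_range converse_rtranclE rtranclE)

lemma finite_out_arcs: "finite {(k, s). (i, k, s) \<in> E}"
  by (rule finite_subset[of _ "{0..<n} \<times> UNIV"]) (use arcs_in_range in auto)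

lemma finite_in_arcs: "finite {(j, s). (j, i, s) \<in> E}"
  by (rule finite_subset[of _ "{0..<n} \<times> UNIV"]) (use arcs_in_range in auto)

lemma in_degree_eq_0_iff: "in_degree E i = 0 \<longleftrightarrow> (\<forall>j. (j, i) \<notin> arcs E)"
  using finite_in_arcs[of i] by (auto simp: in_degree_def arcs_def)

lemma out_degree_eq_0_iff: "out_degree E i = 0 \<longleftrightarrow> (\<forall>k. (i, k) \<notin> arcs E)"
  using finite_out_arcs[of i] by (auto simp: out_degree_def arcs_def)

lemma out_degree_ge_2_if_parallel:
  assumes "(i, k, True) \<in> E" "(i, k, False) \<in> E"
  shows "2 \<le> out_degree E i"
proof -
  have "{(k, True), (k, False)} \<subseteq> {(k, s). (i, k, s) \<in> E}" using assms by auto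
  from card_mono[OF finite_out_arcs this] show ?thesis by (simp add: out_degree_def)
qed

lemma out_arc_unique:
  assumes "out_degree E i \<le> 1" "(i, k, s) \<in> E" "(i, k', s') \<in> E"
  shows "k = k' \<and> s = s'"
  using assms card_le_Suc0_iff_eq[OF finite_out_arcs, of i] by (auto simp: out_degree_def)

definition ancestors :: "nat \<Rightarrow> nat set" where
  "ancestors a = {b. (b, a) \<in> (arcs E)\<^sup>*}"

lemma ancestors_subset: "a < n \<Longrightarrow> ancestors a \<subseteq> {0..<n}"
  unfolding ancestors_def using rtrancl_in_range by fastforce

lemma rtrancl_within_ancestors:
  assumes "(u, v) \<in> (arcs E)\<^sup>*" "(v, a) \<in> (arcs E)\<^sup>*"
  shows "(u, v) \<in> (arcs E \<inter> ancestors a \<times> ancestors a)\<^sup>*"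
  using assms
proof (induction rule: converse_rtrancl_induct)
  case (step y z)
  then have "(y, z) \<in> arcs E \<inter> ancestors a \<times> ancestors a"
    by (auto simp: ancestors_def intro: rtrancl_trans converse_rtrancl_into_rtrancl)
  then show ?case using step by (meson converse_rtrancl_into_rtrancl)
qed simp

lemma initial_sc_ancestors:
  assumes "a < n" and reaches: "\<And>b. b \<in> ancestors a \<Longrightarrow> (a, b) \<in> (arcs E)\<^sup>*"
  shows "initial_sc n E (ancestors a)"
proof -
  have "a \<in> ancestors a" by (simp add: ancestors_def)
  have sc: "strongly_connected_in (arcs E) (ancestors a)"
    unfolding strongly_connected_in_def
  proof (intro ballI)
    fix u v assume "u \<in> ancestors a" "v \<in> ancestors a"
    then have "(u, v) \<in> (arcs E)\<^sup>*" "(v, a) \<in> (arcs E)\<^sup>*"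
      using reaches by (auto simp: ancestors_def intro: rtrancl_trans)
    then show "(u, v) \<in> (arcs E \<inter> ancestors a \<times> ancestors a)\<^sup>*"
      by (rule rtrancl_within_ancestors)
  qed
  have maximal: "U' = ancestors a"
    if "ancestors a \<subseteq> U'" "strongly_connected_in (arcs E) U'" for U'
  proof -
    have "(w, a) \<in> (arcs E)\<^sup>*" if "w \<in> U'" for w
    proof -
      have "(w, a) \<in> (arcs E \<inter> U' \<times> U')\<^sup>*"
        using \<open>w \<in> U'\<close> \<open>a \<in> ancestors a\<close>
          \<open>ancestors a \<subseteq> U'\<close> \<open>strongly_connected_in (arcs E) U'\<close>
        unfolding strongly_connected_in_def by blast
      then show ?thesis by (rule rtrancl_Int_rtrancl)
    qed
    then show ?thesis using \<open>ancestors a \<subseteq> U'\<close> by (auto simp: ancestors_def)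
  qed
  have closed: "\<not> (\<exists>j i. (j, i) \<in> arcs E \<and> j \<notin> ancestors a \<and> i \<in> ancestors a)"
    by (auto simp: ancestors_def intro: converse_rtrancl_into_rtrancl)
  show ?thesis
    unfolding initial_sc_def strong_component_def
    using ancestors_subset[OF \<open>a < n\<close>] \<open>a \<in> ancestors a\<close> sc maximal closed by blast
qed

lemma ex_initial_sc_reaching:
  assumes "i < n"
  obtains U u where "initial_sc n E U" "u \<in> U" "(u, i) \<in> (arcs E)\<^sup>*"
proof -
  have "i \<in> ancestors i" by (simp add: ancestors_def)
  then obtain a where a: "a \<in> ancestors i"
    and least: "\<And>b. b \<in> ancestors i \<Longrightarrow> card (ancestors a) \<le> card (ancestors b)"
    using ex_has_least_nat[of "\<lambda>a. a \<in> ancestors i" i "\<lambda>a. card (ancestors a)"] by blast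
  have "a < n" using a ancestors_subset[OF assms] by auto
  have reaches: "(a, b) \<in> (arcs E)\<^sup>*" if "b \<in> ancestors a" for b
  proof -
    have "ancestors b \<subseteq> ancestors a" "b \<in> ancestors i"
      using that a by (auto simp: ancestors_def intro: rtrancl_trans)
    then have "ancestors b = ancestors a"
      using least card_seteq[OF finite_subset[OF ancestors_subset[OF \<open>a < n\<close>]]] by blast
    then show ?thesis by (auto simp: ancestors_def)
  qed
  have "initial_sc n E (ancestors a)"
    using \<open>a < n\<close> reaches by (rule initial_sc_ancestors)
  moreover have "a \<in> ancestors a" "(a, i) \<in> (arcs E)\<^sup>*"
    using a by (simp_all add: ancestors_def)
  ultimately show ?thesis by (rule that)
qed

lemma initial_scD:
  assumes "initial_sc n E U"
  shows "U \<subseteq> {0..<n}" "U \<noteq> {}" "strongly_connected_in (arcs E) U"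
    and "\<not> (\<exists>j i. (j, i) \<in> arcs E \<and> j \<notin> U \<and> i \<in> U)"
  using assms unfolding initial_sc_def strong_component_def by blast+

lemma finite_initial_sc:
  assumes "initial_sc n E U" shows "finite U"
  using initial_scD(1)[OF assms] by (rule finite_subset) simp

lemma finite_initial_scs: "finite {U. initial_sc n E U}"
proof (rule finite_subset)
  show "{U. initial_sc n E U} \<subseteq> Pow {0..<n}" using initial_scD(1) by blast
qed simp

lemma initial_sc_closed_backward:
  assumes "initial_sc n E U" "(w, v) \<in> (arcs E)\<^sup>*" "v \<in> U"
  shows "w \<in> U"
  using assms(2,3)
proof (induction rule: converse_rtrancl_induct)
  case (step y z)
  then show ?case using initial_scD(4)[OF assms(1)] by blast
qed

lemma initial_sc_strongly_connected:
  assumes "initial_sc n E U" "u \<in> U" "v \<in> U"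
  shows "(u, v) \<in> (arcs E \<inter> U \<times> U)\<^sup>*"
  using initial_scD(3)[OF assms(1)] assms(2,3) unfolding strongly_connected_in_def by blast

lemma nontrivial_initial_sc_out_arc:
  assumes "initial_sc n E U" "\<not> trivial_sc E U" "u \<in> U"
  obtains w where "w \<in> U" "(u, w) \<in> arcs E"
proof (cases "U = {u}")
  case True
  then show ?thesis using assms(2) that by (auto simp: trivial_sc_def)
next
  case False
  then obtain v where "v \<in> U" "v \<noteq> u" using assms(3) by blast
  then have "(u, v) \<in> (arcs E \<inter> U \<times> U)\<^sup>*"
    using initial_sc_strongly_connected assms by blast
  then obtain w where "(u, w) \<in> arcs E \<inter> U \<times> U"
    using \<open>v \<noteq> u\<close> by (cases rule: converse_rtranclE) auto
  then show ?thesis using that by blast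
qed

lemma trivial_initial_sc_source:
  assumes "initial_sc n E U" "trivial_sc E U"
  obtains s where "U = {s}" "s < n" "\<forall>j. (j, s) \<notin> arcs E"
proof -
  obtain s where "U = {s}"
    using assms(2) card_1_singletonE by (auto simp: trivial_sc_def)
  moreover have "s < n" using initial_scD(1)[OF assms(1)] \<open>U = {s}\<close> by auto
  moreover have "\<forall>j. (j, s) \<notin> arcs E"
    using initial_scD(4)[OF assms(1)] assms(2) \<open>U = {s}\<close> unfolding trivial_sc_def by auto
  ultimately show ?thesis using that by blast
qed

lemma arcs_eq_graph:
  assumes "\<And>u w. u < n \<Longrightarrow> (u, w) \<in> arcs E \<longleftrightarrow> w = g u"
  shows "arcs E = {(u, g u) | u. u < n}"
proof (intro equalityI subsetI)
  fix p assume "p \<in> arcs E"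
  then obtain y z where p: "p = (y, z)" "(y, z) \<in> arcs E" by (cases p) auto
  then have "y < n" using arc_in_range by blast
  with p show "p \<in> {(u, g u) | u. u < n}" using assms by blast
next
  fix p assume "p \<in> {(u, g u) | u. u < n}"
  then show "p \<in> arcs E" using assms by blast
qed

definition some_out_nbr :: "nat \<Rightarrow> nat" where
  "some_out_nbr u = (SOME w. (u, w) \<in> arcs E)"

lemma out_nbr_unique:
  assumes "initial_sc n E U" "\<not> trivial_sc E U" "u \<in> U" "out_degree E u \<le> 1"
  shows "some_out_nbr u \<in> U" "(u, w) \<in> arcs E \<longleftrightarrow> w = some_out_nbr u"
proof -
  obtain w0 where w0: "w0 \<in> U" "(u, w0) \<in> arcs E"
    using nontrivial_initial_sc_out_arc[OF assms(1-3)] .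
  have unique: "w = w0" if "(u, w) \<in> arcs E" for w
    using that w0(2) out_arc_unique[OF assms(4)] by (auto simp: arcs_def)
  have "(u, some_out_nbr u) \<in> arcs E"
    unfolding some_out_nbr_def using w0(2) by (rule someI)
  then have "some_out_nbr u = w0" by (rule unique)
  then show "some_out_nbr u \<in> U" using w0(1) by simp
  show "(u, w) \<in> arcs E \<longleftrightarrow> w = some_out_nbr u"
    using unique w0(2) \<open>some_out_nbr u = w0\<close> by blast
qed

end

locale connected_signed_digraph = signed_digraph +
  assumes connected: "sd_connected n E"
    and not_cycle: "\<not> is_signed_cycle n E"
begin

lemma initial_sc_eq_all_if_forward_closed:
  assumes U: "initial_sc n E U" and forward: "\<And>y z. (y, z) \<in> arcs E \<Longrightarrow> y \<in> U \<Longrightarrow> z \<in> U"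
  shows "U = {0..<n}"
proof -
  have closed: "y \<in> U \<longleftrightarrow> z \<in> U" if "(y, z) \<in> arcs E" for y z
    using forward[OF that] initial_sc_closed_backward[OF U _ , of y z] that by blast
  obtain u0 where "u0 \<in> U" using initial_scD(2)[OF U] by blast
  moreover have "u0 < n" using \<open>u0 \<in> U\<close> initial_scD(1)[OF U] by auto
  ultimately have "{0..<n} \<subseteq> U"
    using closed by (rule sd_connected_closed_set[OF connected])
  then show ?thesis using initial_scD(1)[OF U] by blast
qed

lemma nontrivial_initial_sc_has_branching:
  assumes U: "initial_sc n E U" "\<not> trivial_sc E U"
  shows "\<exists>q\<in>U. 2 \<le> out_degree E q"
proof (rule ccontr)
  assume "\<not> ?thesis"
  then have le1: "out_degree E u \<le> 1" if "u \<in> U" for u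
    using that by fastforce
  have succ_in: "some_out_nbr u \<in> U" if "u \<in> U" for u
    using out_nbr_unique(1)[OF U that le1[OF that]] .
  have succ_iff: "(u, w) \<in> arcs E \<longleftrightarrow> w = some_out_nbr u" if "u \<in> U" for u w
    using out_nbr_unique(2)[OF U that le1[OF that]] .
  have U_all: "U = {0..<n}"
    using U(1) by (rule initial_sc_eq_all_if_forward_closed) (metis succ_in succ_iff)
  have "is_signed_cycle n E"
  proof (rule signed_cycle_if_arcs_follow_function)
    show "0 < n" using initial_scD(2)[OF U(1)] U_all by auto
    show "some_out_nbr u < n" if "u < n" for u
      using succ_in U_all that by simp
    show "arcs E = {(u, some_out_nbr u) | u. u < n}"
    proof (rule arcs_eq_graph)
      fix u w assume "u < n"
      then show "(u, w) \<in> arcs E \<longleftrightarrow> w = some_out_nbr u"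
        using succ_iff U_all by simp
    qed
    show "(u, v) \<in> (arcs E)\<^sup>*" if "u < n" "v < n" for u v
      by (rule rtrancl_Int_rtrancl, rule initial_sc_strongly_connected[OF U(1)])
        (use U_all that in simp_all)
    show "\<not> (\<exists>j i. (j, i, True) \<in> E \<and> (j, i, False) \<in> E)"
    proof
      assume "\<exists>j i. (j, i, True) \<in> E \<and> (j, i, False) \<in> E"
      then obtain j i where "(j, i, True) \<in> E" "(j, i, False) \<in> E" by blast
      moreover have "j \<in> U" using calculation arcs_in_range U_all by auto
      ultimately show False using out_degree_ge_2_if_parallel le1 by fastforce
    qed
  qed
  then show False using not_cycle by contradiction
qed

end

section \<open>An and-or network realising a signed digraph\<close>

context signed_digraph
begin

abbreviation preds :: "nat \<Rightarrow> nat set" where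
  "preds i \<equiv> {j. (j, i) \<in> arcs E}"

abbreviation pos :: "nat \<Rightarrow> nat \<Rightarrow> bool" where
  "pos j i \<equiv> (j, i, True) \<in> E"

abbreviation neg :: "nat \<Rightarrow> nat \<Rightarrow> bool" where
  "neg j i \<equiv> (j, i, False) \<in> E"

definition hi :: "nat \<Rightarrow> int" where
  "hi j = (if 2 \<le> out_degree E j then 2
           else if out_degree E j = 0 \<and> in_degree E j = 0 then 0 else 1)"

definition lit :: "nat \<Rightarrow> nat \<Rightarrow> int \<Rightarrow> bool" where
  "lit j i v = (if pos j i \<and> neg j i then v = 1 else if pos j i then hi j \<le> v else v < hi j)"

definition loop_succ :: "nat \<Rightarrow> nat" where
  "loop_succ q = (SOME r. (q, r) \<in> arcs E \<and> (r, q) \<in> (arcs E)\<^sup>*)"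

definition active :: "nat \<Rightarrow> int" where
  "active q = (if pos q (loop_succ q) \<and> neg q (loop_succ q) then 2 else 1)"

definition gate :: "(nat \<Rightarrow> bool) \<Rightarrow> nat \<Rightarrow> (nat \<Rightarrow> int) \<Rightarrow> bool" where
  "gate c i x \<longleftrightarrow> (if c i then \<exists>k\<in>preds i. lit k i (x k) else \<forall>k\<in>preds i. lit k i (x k))"

definition fds :: "(nat \<Rightarrow> bool) \<Rightarrow> (nat \<Rightarrow> int) \<Rightarrow> nat \<Rightarrow> int" where
  "fds c x i = (if preds i \<noteq> {} \<and> gate c i x then active i else 0)"

abbreviation X :: "(nat \<Rightarrow> int) set" where
  "X \<equiv> state_space n (\<lambda>_. 0) hi"

lemma arc_sign: "(j, i) \<in> arcs E \<Longrightarrow> pos j i \<or> neg j i"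
  by (auto simp: arcs_def) (metis (full_types))

lemma hi_nonneg: "0 \<le> hi j"
  by (simp add: hi_def)

lemma one_le_hi_if_out_arc: "(j, i) \<in> arcs E \<Longrightarrow> 1 \<le> hi j"
  using out_degree_eq_0_iff by (auto simp: hi_def)

lemma one_le_hi_if_in_arc: "(j, i) \<in> arcs E \<Longrightarrow> 1 \<le> hi i"
  using in_degree_eq_0_iff by (auto simp: hi_def)

lemma hi_eq_2_if_parallel: "pos j i \<Longrightarrow> neg j i \<Longrightarrow> hi j = 2"
  using out_degree_ge_2_if_parallel by (simp add: hi_def)

lemma active_pos: "0 < active i"
  by (simp add: active_def)

lemma active_bounds: "(j, i) \<in> arcs E \<Longrightarrow> 1 \<le> active i \<and> active i \<le> hi i"
  using one_le_hi_if_in_arc hi_eq_2_if_parallel by (auto simp: active_def)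

lemma ex_lit_value:
  assumes "(k, i) \<in> arcs E"
  obtains v where "0 \<le> v" "v \<le> hi k" "lit k i v = b"
proof -
  have "1 \<le> hi k" using one_le_hi_if_out_arc[OF assms] .
  then have "\<exists>v. 0 \<le> v \<and> v \<le> hi k \<and> lit k i v = b"
    using arc_sign[OF assms] hi_eq_2_if_parallel[of k i] unfolding lit_def
    by (cases b; cases "pos k i"; cases "neg k i") (auto intro: exI[of _ 0] exI[of _ 1] exI[of _ "hi k"])
  then show ?thesis using that by blast
qed

lemma lit_flip:
  assumes "(j, i, s) \<in> E"
  obtains v where "0 \<le> v" "v < hi j" "lit j i v = (\<not> s)" "lit j i (v + 1) = s"
proof -
  have arc: "(j, i) \<in> arcs E" using assms by (auto simp: arcs_def)
  have "1 \<le> hi j" using one_le_hi_if_out_arc[OF arc] .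
  then have "\<exists>v. 0 \<le> v \<and> v < hi j \<and> lit j i v = (\<not> s) \<and> lit j i (v + 1) = s"
    using assms hi_eq_2_if_parallel[of j i] unfolding lit_def
    by (cases s; cases "pos j i"; cases "neg j i")
      (auto intro: exI[of _ 0] exI[of _ 1] exI[of _ "hi j - 1"])
  then show ?thesis using that by blast
qed

lemma lit_change_sign:
  assumes "(j, i) \<in> arcs E" "lit j i (v + 1) \<noteq> lit j i v"
  shows "(j, i, lit j i (v + 1)) \<in> E"
  using assms(2) arc_sign[OF assms(1)] unfolding lit_def by (auto split: if_splits)

lemma fds_cases: "fds c x i = 0 \<or> (fds c x i = active i \<and> preds i \<noteq> {})"
  by (simp add: fds_def)

lemma fds_in_state_space: "fds c x \<in> X"
proof -
  have "0 \<le> fds c x i \<and> fds c x i \<le> hi i" for i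
    using fds_cases[of c x i] active_bounds hi_nonneg by fastforce
  moreover have "fds c x i = 0" if "n \<le> i" for i
    using that arc_in_range by (fastforce simp: fds_def)
  ultimately show ?thesis by (simp add: state_space_def)
qed

lemma is_FDS_fds: "is_FDS n (\<lambda>_. 0) hi (fds c)"
  unfolding is_FDS_def using fds_in_state_space hi_nonneg by blast

lemma gate_update:
  assumes "gate c i (x(j := v)) \<noteq> gate c i x"
  shows "j \<in> preds i \<and> lit j i v = gate c i (x(j := v)) \<and> lit j i (x j) = gate c i x"
proof -
  have other: "k \<noteq> j \<Longrightarrow> lit k i ((x(j := v)) k) = lit k i (x k)" for k
    by simp
  show ?thesis
  proof (cases "c i")
    case True
    then show ?thesis using assms other unfolding gate_def by (smt (verit, best) fun_upd_same)
  next
    case False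
    then show ?thesis using assms other unfolding gate_def by (smt (verit, best) fun_upd_same)
  qed
qed

lemma interaction_graph_fds_subset: "interaction_graph n (\<lambda>_. 0) hi (fds c) \<subseteq> E"
proof
  fix e assume "e \<in> interaction_graph n (\<lambda>_. 0) hi (fds c)"
  then obtain j i s x where e: "e = (j, i, s)" and "x \<in> X"
    and sign: "if s then fds c (x(j := x j + 1)) i - fds c x i > 0
               else fds c (x(j := x j + 1)) i - fds c x i < 0"
    by (auto simp: interaction_graph_def)
  let ?x' = "x(j := x j + 1)"
  have "fds c ?x' i \<noteq> fds c x i" using sign by (auto split: if_splits)
  then have "gate c i ?x' \<noteq> gate c i x" and s: "s = gate c i ?x'"
    using sign active_pos[of i] by (auto simp: fds_def split: if_splits)
  then have "(j, i) \<in> arcs E" "lit j i (x j + 1) = s" "lit j i (x j) \<noteq> s"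
    using gate_update by blast+
  then have "(j, i, lit j i (x j + 1)) \<in> E"
    by (intro lit_change_sign) simp_all
  then show "e \<in> E" using e \<open>lit j i (x j + 1) = s\<close> by simp
qed

lemma state_isolating_arc:
  assumes ji: "(j, i) \<in> arcs E" and "0 \<le> v" "v \<le> hi j"
  obtains x where "x \<in> X" "x j = v"
    and "\<And>u. fds c (x(j := u)) i = (if lit j i u then active i else 0)"
proof -
  have "\<forall>k\<in>preds i. \<exists>w. 0 \<le> w \<and> w \<le> hi k \<and> lit k i w = (\<not> c i)"
    using ex_lit_value by blast
  then obtain w where w: "\<And>k. k \<in> preds i \<Longrightarrow> 0 \<le> w k \<and> w k \<le> hi k \<and> lit k i (w k) = (\<not> c i)"
    by metis
  \<comment> \<open>the other in-neighbours of i are neutral for its gate, so x j alone decides f i\<close>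
  define x where "x k = (if k = j then v else if k \<in> preds i then w k else 0)" for k
  have "x \<in> X"
    using assms w hi_nonneg by (auto simp: state_space_def x_def dest: arc_in_range)
  moreover have "gate c i (x(j := u)) = lit j i u" for u
    using ji w unfolding gate_def x_def by (cases "c i") auto
  then have "fds c (x(j := u)) i = (if lit j i u then active i else 0)" for u
    using ji by (auto simp: fds_def)
  moreover have "x j = v" by (simp add: x_def)
  ultimately show ?thesis using that by blast
qed

lemma interaction_graph_fds_superset: "E \<subseteq> interaction_graph n (\<lambda>_. 0) hi (fds c)"
proof
  fix e assume "e \<in> E"
  then obtain j i s where e: "e = (j, i, s)" and jis: "(j, i, s) \<in> E" by (cases e) auto
  then have ji: "(j, i) \<in> arcs E" by (auto simp: arcs_def)
  obtain v where v: "0 \<le> v" "v < hi j" "lit j i v = (\<not> s)" "lit j i (v + 1) = s"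
    using lit_flip[OF jis] .
  obtain x where x: "x \<in> X" "x j = v"
    and fds_upd: "\<And>u. fds c (x(j := u)) i = (if lit j i u then active i else 0)"
    using state_isolating_arc[OF ji \<open>0 \<le> v\<close>] v(2) by auto
  have "x(j := v) = x" using x(2) by auto
  then have "fds c x i = (if lit j i v then active i else 0)"
    using fds_upd[of v] by simp
  moreover have "fds c (x(j := x j + 1)) i = (if lit j i (v + 1) then active i else 0)"
    using fds_upd x(2) by simp
  ultimately have
    "if s then fds c (x(j := x j + 1)) i - fds c x i > 0
     else fds c (x(j := x j + 1)) i - fds c x i < 0"
    using v active_pos[of i] by auto
  then show "e \<in> interaction_graph n (\<lambda>_. 0) hi (fds c)"
    using e ji arc_in_range x v(2) by (auto simp: interaction_graph_def)
qed

lemma interaction_graph_fds: "interaction_graph n (\<lambda>_. 0) hi (fds c) = E"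
  using interaction_graph_fds_subset interaction_graph_fds_superset by blast

lemma degree_bounded_fds: "degree_bounded n (\<lambda>_. 0) hi (fds c)"
  unfolding degree_bounded_def Let_def interaction_graph_fds by (auto simp: hi_def)

section \<open>Freezing\<close>

definition source :: "nat \<Rightarrow> bool" where
  "source i \<longleftrightarrow> i < n \<and> preds i = {}"

definition anchors :: "nat set" where
  "anchors = {loop_succ q | q. 2 \<le> out_degree E q \<and> (q, loop_succ q) \<in> arcs E}"

definition anchor_src :: "nat \<Rightarrow> nat" where
  "anchor_src r = (SOME q. 2 \<le> out_degree E q \<and> (q, loop_succ q) \<in> arcs E \<and> r = loop_succ q)"

text \<open>
  frozen t i certifies that component i has its final value limit i from step t on; this is
  the content of fds_funpow_frozen.
\<close>

inductive frozen :: "nat \<Rightarrow> nat \<Rightarrow> bool" where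
  source: "source i \<Longrightarrow> frozen (Suc t) i"
| anchor: "i \<in> anchors \<Longrightarrow> frozen (Suc (Suc t)) i"
| arc: "frozen t j \<Longrightarrow> (j, i) \<in> arcs E \<Longrightarrow> frozen (Suc t) i"

definition freeze_time :: "nat \<Rightarrow> nat" where
  "freeze_time i = (LEAST t. frozen t i)"

definition freezing_pred :: "nat \<Rightarrow> nat" where
  "freezing_pred i = (SOME j. (j, i) \<in> arcs E \<and> frozen (freeze_time i - 1) j)"

text \<open>
  The gate of i is absorbing for the final value of its freezing predecessor, and at an anchor
  for the constant value of its anchor literal. The fuel m only makes the recursion total.
\<close>

fun or_gate_upto :: "nat \<Rightarrow> nat \<Rightarrow> bool" where
  "or_gate_upto 0 i = False"
| "or_gate_upto (Suc m) i =
     (if source i then False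
      else if i \<in> anchors then lit (anchor_src i) i 0
      else let j = freezing_pred i in lit j i (if or_gate_upto m j then active j else 0))"

definition is_or :: "nat \<Rightarrow> bool" where
  "is_or i = or_gate_upto (freeze_time i) i"

definition limit :: "nat \<Rightarrow> int" where
  "limit i = (if i < n \<and> is_or i then active i else 0)"

lemma anchor_src_spec:
  assumes "r \<in> anchors"
  shows "2 \<le> out_degree E (anchor_src r) \<and> (anchor_src r, r) \<in> arcs E \<and> r = loop_succ (anchor_src r)"
proof -
  have "\<exists>q. 2 \<le> out_degree E q \<and> (q, loop_succ q) \<in> arcs E \<and> r = loop_succ q"
    using assms by (auto simp: anchors_def)
  then have "2 \<le> out_degree E (anchor_src r) \<and> (anchor_src r, loop_succ (anchor_src r)) \<in> arcs E
      \<and> r = loop_succ (anchor_src r)"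
    unfolding anchor_src_def by (rule someI_ex)
  then show ?thesis by auto
qed

lemma anchor_not_source: "r \<in> anchors \<Longrightarrow> \<not> source r"
  using anchor_src_spec by (auto simp: source_def)

lemma lit_anchor_constant:
  assumes "r \<in> anchors" "v = 0 \<or> v = active (anchor_src r)"
  shows "lit (anchor_src r) r v = lit (anchor_src r) r 0"
proof -
  let ?q = "anchor_src r"
  have "hi ?q = 2" "r = loop_succ ?q"
    using anchor_src_spec[OF assms(1)] by (auto simp: hi_def)
  then show ?thesis using assms(2) by (auto simp: lit_def active_def)
qed

lemma frozen_Suc: "frozen t i \<Longrightarrow> frozen (Suc t) i"
  by (induction rule: frozen.induct) (auto intro: frozen.intros)

lemma frozen_mono:
  assumes "frozen t i" "t \<le> t'"
  shows "frozen t' i"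
  using assms(2,1) by (induction t' rule: dec_induct) (auto intro: frozen_Suc)

lemma not_frozen_0: "\<not> frozen 0 i"
  by (auto elim: frozen.cases)

lemma frozen_1_source: "frozen (Suc 0) i \<Longrightarrow> source i"
  by (auto elim: frozen.cases simp: not_frozen_0)

lemma frozen_along_path: "(u, i) \<in> arcs E ^^ d \<Longrightarrow> frozen t u \<Longrightarrow> frozen (t + d) i"
proof (induction d arbitrary: i)
  case (Suc d)
  then obtain y where "(u, y) \<in> arcs E ^^ d" "(y, i) \<in> arcs E" by auto
  then show ?case using Suc by (auto intro: frozen.arc)
qed simp

lemma frozen_freeze_time: "frozen t i \<Longrightarrow> frozen (freeze_time i) i \<and> freeze_time i \<le> t"
  unfolding freeze_time_def by (meson LeastI Least_le)

lemma freeze_time_pos: "frozen t i \<Longrightarrow> 0 < freeze_time i"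
  using frozen_freeze_time not_frozen_0 by (metis gr0I)

lemma freezing_pred_spec:
  assumes "frozen t i" "\<not> source i" "i \<notin> anchors"
  shows "(freezing_pred i, i) \<in> arcs E \<and> frozen (freeze_time i - 1) (freezing_pred i)"
proof -
  have "frozen (freeze_time i) i" using frozen_freeze_time[OF assms(1)] by blast
  then have "\<exists>j. (j, i) \<in> arcs E \<and> frozen (freeze_time i - 1) j"
    using assms(2,3) by (cases rule: frozen.cases) auto
  then show ?thesis unfolding freezing_pred_def by (rule someI_ex)
qed

lemma or_gate_upto_stable:
  assumes "frozen t i" "freeze_time i \<le> m"
  shows "or_gate_upto m i = is_or i"
  using assms
proof (induction m arbitrary: i t rule: less_induct)
  case (less m)
  obtain r where r: "freeze_time i = Suc r"
    using freeze_time_pos[OF less.prems(1)] gr0_implies_Suc by blast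
  then obtain m' where m': "m = Suc m'" using less.prems(2) by (cases m) auto
  show ?case
  proof (cases "source i \<or> i \<in> anchors")
    case True
    then show ?thesis using r m' by (auto simp: is_or_def)
  next
    case False
    let ?j = "freezing_pred i"
    have j: "frozen r ?j" using freezing_pred_spec[OF less.prems(1)] False r by simp
    then have "freeze_time ?j \<le> r" using frozen_freeze_time by blast
    then have "or_gate_upto m' ?j = is_or ?j" "or_gate_upto r ?j = is_or ?j"
      using less.IH[OF _ j] r m' less.prems(2) by simp_all
    then show ?thesis using False r m' by (simp add: is_or_def Let_def)
  qed
qed

lemma is_or_source:
  assumes "source i" shows "\<not> is_or i"
proof -
  have "0 < freeze_time i" using frozen.source[OF assms] by (rule freeze_time_pos)
  then show ?thesis using assms by (auto simp: is_or_def gr0_conv_Suc)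
qed

lemma is_or_anchor:
  assumes "i \<in> anchors" shows "is_or i = lit (anchor_src i) i 0"
proof -
  have "0 < freeze_time i" using frozen.anchor[OF assms] by (rule freeze_time_pos)
  then show ?thesis using assms anchor_not_source by (auto simp: is_or_def gr0_conv_Suc)
qed

lemma is_or_freezing_pred:
  assumes "frozen t i" "\<not> source i" "i \<notin> anchors"
  shows "is_or i = lit (freezing_pred i) i (limit (freezing_pred i))"
proof -
  let ?j = "freezing_pred i"
  obtain r where r: "freeze_time i = Suc r"
    using freeze_time_pos[OF assms(1)] gr0_implies_Suc by blast
  have "frozen r ?j" "?j < n"
    using freezing_pred_spec[OF assms] r arc_in_range by auto
  then have "or_gate_upto r ?j = is_or ?j"
    using or_gate_upto_stable frozen_freeze_time by blast
  then show ?thesis using assms(2,3) r \<open>?j < n\<close> by (simp add: is_or_def limit_def Let_def)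
qed

lemma fds_absorbing:
  assumes "(k, i) \<in> arcs E" "lit k i (y k) = is_or i"
  shows "fds is_or y i = limit i"
proof -
  have "gate is_or i y = is_or i"
    using assms unfolding gate_def by auto
  then show ?thesis
    using assms(1) arc_in_range by (auto simp: fds_def limit_def)
qed

lemma fds_twice_anchor:
  assumes "i \<in> anchors"
  shows "fds is_or (fds is_or z) i = limit i"
proof -
  let ?q = "anchor_src i"
  have "fds is_or z ?q = 0 \<or> fds is_or z ?q = active ?q"
    using fds_cases[of is_or z ?q] by blast
  then have "lit ?q i (fds is_or z ?q) = lit ?q i 0"
    by (rule lit_anchor_constant[OF assms])
  then have "lit ?q i (fds is_or z ?q) = is_or i"
    using is_or_anchor[OF assms] by simp
  with anchor_src_spec[OF assms] show ?thesis
    by (intro fds_absorbing) auto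
qed

lemma fds_funpow_in_state_space: "x \<in> X \<Longrightarrow> (fds c ^^ t) x \<in> X"
  by (induction t) (simp_all add: fds_in_state_space)

lemma fds_funpow_frozen:
  assumes "frozen t i" "x \<in> X"
  shows "(fds is_or ^^ t) x i = limit i"
  using assms(1)
proof (induction t arbitrary: i rule: less_induct)
  case (less t)
  obtain t' where t': "t = Suc t'"
    using less.prems not_frozen_0 by (cases t) auto
  define y where "y = (fds is_or ^^ t') x"
  have step: "(fds is_or ^^ t) x = fds is_or y" using t' by (simp add: y_def)
  consider "source i" | "\<not> source i" "i \<in> anchors" | "\<not> source i" "i \<notin> anchors" by blast
  then show ?case
  proof cases
    case 1
    then have "fds is_or y i = 0" by (simp add: fds_def source_def)
    then show ?thesis using is_or_source[OF 1] step by (simp add: limit_def)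
  next
    case 2
    have "t \<noteq> Suc 0" using 2 frozen_1_source[of i] less.prems by auto
    then obtain t'' where "t = Suc (Suc t'')" using t' by (cases t') auto
    then show ?thesis using fds_twice_anchor[OF 2(2)] by simp
  next
    case 3
    let ?j = "freezing_pred i"
    have "frozen t' ?j"
      using freezing_pred_spec[OF less.prems 3] frozen_freeze_time[OF less.prems] t'
      by (auto intro: frozen_mono)
    then have "y ?j = limit ?j" using less.IH t' by (simp add: y_def)
    then have "lit ?j i (y ?j) = is_or i" using is_or_freezing_pred[OF less.prems 3] by simp
    with freezing_pred_spec[OF less.prems 3] have "fds is_or y i = limit i"
      by (intro fds_absorbing) auto
    then show ?thesis using step by simp
  qed
qed

end

context connected_signed_digraph
begin

lemma anchor_in_nontrivial_initial_sc:
  assumes U: "initial_sc n E U" "\<not> trivial_sc E U"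
  obtains r where "r \<in> U" "r \<in> anchors"
proof -
  obtain q where q: "q \<in> U" "2 \<le> out_degree E q"
    using nontrivial_initial_sc_has_branching[OF U] by blast
  obtain r0 where "r0 \<in> U" "(q, r0) \<in> arcs E"
    using nontrivial_initial_sc_out_arc[OF U q(1)] .
  moreover have "(r0, q) \<in> (arcs E)\<^sup>*"
    using initial_sc_strongly_connected[OF U(1) \<open>r0 \<in> U\<close> q(1)] by (rule rtrancl_Int_rtrancl)
  ultimately have "(q, loop_succ q) \<in> arcs E \<and> (loop_succ q, q) \<in> (arcs E)\<^sup>*"
    unfolding loop_succ_def by (intro someI) blast
  then have "loop_succ q \<in> U" "loop_succ q \<in> anchors"
    using initial_sc_closed_backward[OF U(1) _ q(1)] q(2) by (auto simp: anchors_def)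
  then show ?thesis using that by blast
qed

lemma nontrivial_initial_sc_frozen:
  assumes U: "initial_sc n E U" "\<not> trivial_sc E U" and "u \<in> U"
  shows "frozen (Suc (card U)) u"
proof -
  obtain r where r: "r \<in> U" "r \<in> anchors"
    using anchor_in_nontrivial_initial_sc[OF U] .
  define S where "S t = {u \<in> U. frozen t u}" for t
  have "S (2 + (card U - 1)) = U"
  proof (rule spreading_family_covers)
    show "finite U" using finite_initial_sc[OF U(1)] .
    show "S t \<subseteq> U" for t by (auto simp: S_def)
    show "S t \<subseteq> S (Suc t)" for t by (auto simp: S_def intro: frozen_Suc)
    show "c \<in> S (Suc t)" if "a \<in> S t" "(a, c) \<in> arcs E" "c \<in> U" for t a c
      using that by (auto simp: S_def intro: frozen.arc)
    show "r \<in> S 2" using r by (auto simp: S_def numeral_2_eq_2 intro: frozen.anchor)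
    show "(r, v) \<in> (arcs E \<inter> U \<times> U)\<^sup>*" if "v \<in> U" for v
      using initial_sc_strongly_connected[OF U(1) r(1) that] .
  qed
  moreover have "2 + (card U - 1) = Suc (card U)"
    using r(1) finite_initial_sc[OF U(1)] by (cases "card U") auto
  ultimately show ?thesis using \<open>u \<in> U\<close> by (auto simp: S_def)
qed

lemma initial_sc_frozen:
  assumes "initial_sc n E U" "u \<in> U"
  shows "frozen (card U + beta n E) u"
proof (cases "trivial_sc E U")
  case True
  then obtain s where "U = {s}" "s < n" "\<forall>j. (j, s) \<notin> arcs E"
    using trivial_initial_sc_source[OF assms(1)] by blast
  then have "frozen (Suc 0) u" using assms(2) by (auto simp: source_def intro: frozen.source)
  then show ?thesis using \<open>U = {s}\<close> by (auto intro: frozen_mono)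
next
  case False
  then have "beta n E = 1" using assms(1) by (auto simp: beta_def basic_def)
  then show ?thesis using nontrivial_initial_sc_frozen[OF assms(1) False assms(2)] by simp
qed

end

section \<open>Distances to initial components\<close>

lemma sd_dist_enatD: "sd_dist E j i = enat d \<Longrightarrow> (j, i) \<in> arcs E ^^ d"
  unfolding sd_dist_def by (metis LeastI_ex enat.distinct(1) enat.inject rtrancl_power)

lemma sd_dist_set_attained:
  assumes "finite U" "U \<noteq> {}"
  obtains u where "u \<in> U" "sd_dist_set E U i = sd_dist E u i"
proof -
  have "sd_dist_set E U i \<in> (\<lambda>j. sd_dist E j i) ` U"
    unfolding sd_dist_set_def using assms by (intro Min_in) auto
  then show ?thesis using that by blast
qed

lemma sd_dist_set_le: "finite U \<Longrightarrow> u \<in> U \<Longrightarrow> sd_dist_set E U i \<le> sd_dist E u i"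
  unfolding sd_dist_set_def by simp

context signed_digraph
begin

definition initial_dist :: "nat \<Rightarrow> enat" where
  "initial_dist i = Min ((\<lambda>U. sd_dist_set E U i + enat (card U)) ` {U. initial_sc n E U})"

lemma lambda_G_eq_Max: "lambda_G n E = Max (initial_dist ` {0..<n})"
  by (simp add: lambda_G_def initial_dist_def)

lemma initial_dist_witness:
  assumes "i < n"
  obtains U u d where "initial_sc n E U" "u \<in> U" "(u, i) \<in> arcs E ^^ d"
    and "initial_dist i = enat (d + card U)"
proof -
  let ?D = "(\<lambda>U. sd_dist_set E U i + enat (card U)) ` {U. initial_sc n E U}"
  obtain U0 u0 where U0: "initial_sc n E U0" "u0 \<in> U0" "(u0, i) \<in> (arcs E)\<^sup>*"
    using ex_initial_sc_reaching[OF assms] .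
  have "finite ?D" using finite_initial_scs by simp
  have "initial_dist i \<le> sd_dist_set E U0 i + enat (card U0)"
    unfolding initial_dist_def using \<open>finite ?D\<close> U0(1) by (intro Min_le) auto
  also have "\<dots> \<le> sd_dist E u0 i + enat (card U0)"
    using sd_dist_set_le[OF finite_initial_sc[OF U0(1)] U0(2)] by (rule add_right_mono)
  also have "\<dots> < \<infinity>"
    using U0(3) by (simp add: sd_dist_def)
  finally have finite_dist: "initial_dist i < \<infinity>" .
  have "initial_dist i \<in> ?D"
    unfolding initial_dist_def using \<open>finite ?D\<close> U0(1) by (intro Min_in) auto
  then obtain U where U: "initial_sc n E U" "initial_dist i = sd_dist_set E U i + enat (card U)"
    by blast
  obtain u where u: "u \<in> U" "sd_dist_set E U i = sd_dist E u i"
    using sd_dist_set_attained[OF finite_initial_sc[OF U(1)] initial_scD(2)[OF U(1)]] .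
  obtain d where "sd_dist E u i = enat d"
    using finite_dist U(2) u(2) by (cases "sd_dist E u i") auto
  then show ?thesis
    using that[OF U(1) u(1) sd_dist_enatD] U(2) u(2) by simp
qed

lemma lambda_G_witness:
  assumes "i < n"
  obtains U u d where "initial_sc n E U" "u \<in> U" "(u, i) \<in> arcs E ^^ d"
    and "d + card U \<le> the_enat (lambda_G n E)"
proof -
  have finite_dists: "initial_dist j \<noteq> \<infinity>" if "j < n" for j
    using initial_dist_witness[OF that] by (metis enat.distinct(1))
  obtain U u d where U: "initial_sc n E U" "u \<in> U" "(u, i) \<in> arcs E ^^ d"
    and dist: "initial_dist i = enat (d + card U)"
    using initial_dist_witness[OF assms] .
  have "lambda_G n E \<in> initial_dist ` {0..<n}"
    unfolding lambda_G_eq_Max using assms by (intro Max_in) auto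
  then have "lambda_G n E \<noteq> \<infinity>" using finite_dists by auto
  moreover have "initial_dist i \<le> lambda_G n E"
    unfolding lambda_G_eq_Max using assms by (intro Max_ge) auto
  ultimately have "d + card U \<le> the_enat (lambda_G n E)"
    using dist by (cases "lambda_G n E") auto
  then show ?thesis using that U by blast
qed

end

context connected_signed_digraph
begin

lemma frozen_by_lambda:
  assumes "i < n"
  shows "frozen (the_enat (lambda_G n E) + beta n E) i"
proof -
  obtain U u d where U: "initial_sc n E U" "u \<in> U" "(u, i) \<in> arcs E ^^ d"
    and bound: "d + card U \<le> the_enat (lambda_G n E)"
    using lambda_G_witness[OF assms] .
  have "frozen (card U + beta n E + d) i"
    using frozen_along_path[OF U(3) initial_sc_frozen[OF U(1,2)]] .
  then show ?thesis
    by (rule frozen_mono) (use bound in simp)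
qed

lemma fds_funpow_eq_limit:
  assumes "x \<in> X"
  shows "(fds is_or ^^ (the_enat (lambda_G n E) + beta n E)) x = limit"
proof
  fix i
  show "(fds is_or ^^ (the_enat (lambda_G n E) + beta n E)) x i = limit i"
  proof (cases "i < n")
    case True
    then show ?thesis using fds_funpow_frozen[OF frozen_by_lambda assms] by blast
  next
    case False
    then show ?thesis
      using fds_funpow_in_state_space[OF assms] by (simp add: state_space_def limit_def)
  qed
qed

lemma limit_source: "i < n \<Longrightarrow> in_degree E i = 0 \<Longrightarrow> limit i = 0"
  using is_or_source in_degree_eq_0_iff by (simp add: source_def limit_def)

end

theorem theorem7:
  fixes n :: nat and E :: "(nat \<times> nat \<times> bool) set"
  assumes "E \<subseteq> {0..<n} \<times> {0..<n} \<times> UNIV"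
    and "sd_connected n E"
    and "\<not> is_signed_cycle n E"
  shows "\<exists>lo hi f \<xi>. is_FDS n lo hi f \<and> interaction_graph n lo hi f = E \<and>
           degree_bounded n lo hi f \<and> \<xi> \<in> state_space n lo hi \<and>
           (\<forall>x\<in>state_space n lo hi. (f ^^ (the_enat (lambda_G n E) + beta n E)) x = \<xi>) \<and>
           (\<forall>i<n. in_degree E i = 0 \<longrightarrow> \<xi> i = lo i)"
proof -
  interpret connected_signed_digraph n E
    using assms by unfold_locales
  have "(\<lambda>_. 0) \<in> X"
    using hi_nonneg by (simp add: state_space_def)
  then have "limit \<in> X"
    using fds_funpow_eq_limit fds_funpow_in_state_space by metis
  then show ?thesis
    using is_FDS_fds interaction_graph_fds degree_bounded_fds fds_funpow_eq_limit limit_source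
    by blast
qed

end
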